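(* Let $k=2r+1$ with $r\geq1$ and $G=BS(1,k)$. Let $c_0(n)$ be the number of conjugacy classes of $G$ contained in the subgroup $\mathbb{Z}[1/k]$ whose length with respect to $\{a,t\}$ is $n$. Then the growth rate $\limsup_n c_0(n)^{1/n}$ of these conjugacy classes lies in the open interval $(\frac{4}{3},2)$.
   Context: $BS(1,k)=\langle a,t\mid tat^{-1}=a^k\rangle\cong \mathbb{Z}[1/k]\rtimes\mathbb{Z}$ via $a\mapsto(1,0)$, $t\mapsto(0,1)$, with the generator of $\mathbb{Z}$ acting by multiplication by $k$; $\mathbb{Z}[1/k]=\{(x,0)\}$ is a normal subgroup. The length of a conjugacy class is the minimal word length of its elements. The growth rate is the reciprocal of the radius of convergence of $\sum c_0(n)z^n$. *)

theory Defs
  imports "HOL-Analysis.Analysis"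
begin

text \<open>BS(1,k) realised as Z[1/k] \<rtimes> Z: pairs (x, m) with x a k-adic rational,
  (x,m)(y,n) = (x + k^m y, m + n).  a = (1,0), t = (0,1).\<close>

definition Zk :: "nat \<Rightarrow> rat set" where
  "Zk k = {q. \<exists>p::int. \<exists>j::nat. q = of_int p / of_nat k ^ j}"

definition BS :: "nat \<Rightarrow> (rat \<times> int) set" where
  "BS k = {g. fst g \<in> Zk k}"

definition bs_mult :: "nat \<Rightarrow> rat \<times> int \<Rightarrow> rat \<times> int \<Rightarrow> rat \<times> int" where
  "bs_mult k g h = (fst g + (of_nat k) powi (snd g) * fst h, snd g + snd h)"

definition bs_inv :: "nat \<Rightarrow> rat \<times> int \<Rightarrow> rat \<times> int" where
  "bs_inv k g = (- ((of_nat k) powi (- snd g)) * fst g, - snd g)"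

definition bs_one :: "rat \<times> int" where
  "bs_one = (0, 0)"

definition bs_a :: "rat \<times> int" where "bs_a = (1, 0)"
definition bs_t :: "rat \<times> int" where "bs_t = (0, 1)"

definition bs_gens :: "nat \<Rightarrow> (rat \<times> int) set" where
  "bs_gens k = {bs_a, bs_inv k bs_a, bs_t, bs_inv k bs_t}"

definition bs_eval :: "nat \<Rightarrow> (rat \<times> int) list \<Rightarrow> rat \<times> int" where
  "bs_eval k ws = foldr (bs_mult k) ws bs_one"

definition bs_wordlen :: "nat \<Rightarrow> rat \<times> int \<Rightarrow> nat" where
  "bs_wordlen k g = (LEAST n. \<exists>ws. length ws = n \<and> set ws \<subseteq> bs_gens k \<and> bs_eval k ws = g)"

definition bs_conjclass :: "nat \<Rightarrow> rat \<times> int \<Rightarrow> (rat \<times> int) set" where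
  "bs_conjclass k g = {bs_mult k (bs_mult k h g) (bs_inv k h) | h. h \<in> BS k}"

definition bs_classlen :: "nat \<Rightarrow> (rat \<times> int) set \<Rightarrow> nat" where
  "bs_classlen k C = (LEAST n. \<exists>g\<in>C. bs_wordlen k g = n)"

definition c0 :: "nat \<Rightarrow> nat \<Rightarrow> nat" where
  "c0 k n = card {C. \<exists>g \<in> BS k. C = bs_conjclass k g \<and> C \<subseteq> {g' \<in> BS k. snd g' = 0}
                      \<and> bs_classlen k C = n}"

end

theory Submission
  imports Defs
begin

text \<open>A conjugacy class inside \<open>\<int>[1/k]\<close> is an orbit \<open>{k^m x | m}\<close>. Reading a word letter by
  letter, \<open>a\<^sup>\<plusminus>\<^sup>1\<close> changes the \<open>k\<close>-adic digit at the current position and \<open>t\<^sup>\<plusminus>\<^sup>1\<close> moves the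
  position; so, up to scaling, every class of length \<open>n\<close> is the class of the value of a digit
  string \<open>d\<^sub>0 \<dots> d\<^sub>l\<close> of cost \<open>\<Sum>(\<bar>d\<^sub>i\<bar> + 2) \<le> n + 2\<close>. There are \<open>O(1.84^s)\<close> strings of cost at
  most \<open>s\<close>, which gives the upper bound. Conversely, the \<open>3^M\<close> strings \<open>1 d\<^sub>1 \<dots> d\<^sub>M\<close> with
  balanced digits \<open>d\<^sub>i \<in> {-1, 0, 1}\<close> have cost at most \<open>3M + 3\<close>, and for \<open>k \<ge> 3\<close> their values are
  pairwise distinct and prime to \<open>k\<close>, hence lie in distinct classes; so the growth rate is at
  least \<open>3^(1/3) > 4/3\<close>.\<close>

lemma bs_mult_assoc:
  assumes "k > 0"
  shows "bs_mult k (bs_mult k g h) l = bs_mult k g (bs_mult k h l)"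
  using assms by (simp add: bs_mult_def algebra_simps power_int_add)

lemma bs_mult_one_left [simp]: "bs_mult k bs_one g = g"
  by (simp add: bs_mult_def bs_one_def)

lemma bs_eval_Nil [simp]: "bs_eval k [] = (0, 0)"
  by (simp add: bs_eval_def bs_one_def)

lemma bs_eval_Cons [simp]: "bs_eval k (g # ws) = bs_mult k g (bs_eval k ws)"
  by (simp add: bs_eval_def)

lemma bs_eval_append:
  assumes "k > 0"
  shows "bs_eval k (xs @ ys) = bs_mult k (bs_eval k xs) (bs_eval k ys)"
  by (induction xs) (simp_all add: bs_mult_assoc[OF assms] flip: bs_one_def)

lemma bs_gens_eq: "bs_gens k = {(1, 0), (-1, 0), (0, 1), (0, -1)}"
  by (simp add: bs_gens_def bs_inv_def bs_a_def bs_t_def)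

definition bs_a_word :: "int \<Rightarrow> (rat \<times> int) list" where
  "bs_a_word p = replicate (nat \<bar>p\<bar>) (of_int (sgn p), 0)"

definition bs_t_word :: "int \<Rightarrow> (rat \<times> int) list" where
  "bs_t_word m = replicate (nat \<bar>m\<bar>) (0, sgn m)"

lemma bs_a_word:
  "bs_eval k (bs_a_word p) = (of_int p, 0)" "set (bs_a_word p) \<subseteq> bs_gens k"
  "length (bs_a_word p) = nat \<bar>p\<bar>"
proof -
  have "bs_eval k (replicate n (x, 0)) = (of_nat n * x, 0)" for n x
    by (induction n) (simp_all add: bs_mult_def algebra_simps)
  then show "bs_eval k (bs_a_word p) = (of_int p, 0)"
    by (simp add: bs_a_word_def sgn_if)
  show "set (bs_a_word p) \<subseteq> bs_gens k" "length (bs_a_word p) = nat \<bar>p\<bar>"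
    by (auto simp: bs_a_word_def bs_gens_eq sgn_if)
qed

lemma bs_t_word:
  "bs_eval k (bs_t_word m) = (0, m)" "set (bs_t_word m) \<subseteq> bs_gens k"
proof -
  have "bs_eval k (replicate n (0, e)) = (0, int n * e)" for n e
    by (induction n) (simp_all add: bs_mult_def algebra_simps)
  then show "bs_eval k (bs_t_word m) = (0, m)"
    by (simp add: bs_t_word_def abs_mult_sgn)
  show "set (bs_t_word m) \<subseteq> bs_gens k"
    by (auto simp: bs_t_word_def bs_gens_eq sgn_if)
qed

lemma bs_generated:
  assumes "k > 0" "g \<in> BS k"
  shows "\<exists>ws. set ws \<subseteq> bs_gens k \<and> bs_eval k ws = g"
proof -
  obtain p j where pj: "fst g = of_int p / of_nat k ^ j"
    using assms(2) by (auto simp: BS_def Zk_def)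
  let ?ws = "bs_t_word (- int j) @ bs_a_word p @ bs_t_word (int j + snd g)"
  have "bs_eval k ?ws = g"
    using assms(1) pj
    by (simp add: bs_eval_append bs_a_word bs_t_word bs_mult_def power_int_minus divide_inverse prod_eq_iff)
  then show ?thesis
    using bs_a_word(2) bs_t_word(2) by (intro exI[of _ ?ws]) auto
qed

lemma bs_wordlen_attained:
  assumes "k > 0" "g \<in> BS k"
  obtains ws where "length ws = bs_wordlen k g" "set ws \<subseteq> bs_gens k" "bs_eval k ws = g"
proof -
  have "\<exists>ws. length ws = bs_wordlen k g \<and> set ws \<subseteq> bs_gens k \<and> bs_eval k ws = g"
    unfolding bs_wordlen_def by (rule LeastI_ex) (use bs_generated[OF assms] in blast)
  then show ?thesis using that by blast
qed

lemma bs_wordlen_le: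
  assumes "set ws \<subseteq> bs_gens k" "bs_eval k ws = g"
  shows "bs_wordlen k g \<le> length ws"
  unfolding bs_wordlen_def by (rule Least_le) (use assms in blast)

lemma bs_classlen_attained:
  assumes "g \<in> C"
  obtains h where "h \<in> C" "bs_wordlen k h = bs_classlen k C"
proof -
  have "\<exists>h\<in>C. bs_wordlen k h = bs_classlen k C"
    unfolding bs_classlen_def by (rule LeastI_ex) (use assms in blast)
  then show ?thesis using that by blast
qed

lemma bs_classlen_le:
  assumes "g \<in> C" "set ws \<subseteq> bs_gens k" "bs_eval k ws = g"
  shows "bs_classlen k C \<le> length ws"
proof -
  have "bs_classlen k C \<le> bs_wordlen k g"
    unfolding bs_classlen_def by (rule Least_le) (use assms in blast)
  also have "\<dots> \<le> length ws" by (rule bs_wordlen_le[OF assms(2,3)])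
  finally show ?thesis .
qed

lemma powi_mult_of_int_mem_Zk: "of_nat k powi m * of_int v \<in> Zk k"
proof (cases "m \<ge> 0")
  case True
  then have "(of_nat k powi m * of_int v :: rat) = of_int (int k ^ nat m * v) / of_nat k ^ 0"
    by (simp add: power_int_def)
  then show ?thesis unfolding Zk_def by blast
next
  case False
  then have "(of_nat k powi m * of_int v :: rat) = of_int v / of_nat k ^ nat (-m)"
    by (simp add: power_int_def field_simps power_inverse)
  then show ?thesis unfolding Zk_def by blast
qed

lemma bs_mem_conjclass_self: "g \<in> bs_conjclass k g"
proof -
  have "bs_mult k (bs_mult k (0, 0) g) (bs_inv k (0, 0)) = g"
    by (cases g) (simp add: bs_mult_def bs_inv_def)
  moreover have "(0, 0) \<in> BS k"
    using powi_mult_of_int_mem_Zk[of k 0 0] by (simp add: BS_def)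
  ultimately show ?thesis
    unfolding bs_conjclass_def by (intro CollectI exI[of _ "(0, 0)"]) simp
qed

lemma bs_conjclass_base:
  assumes "k > 0"
  shows "bs_conjclass k (x, 0) = {(of_nat k powi m * x, 0) | m. True}"
proof -
  have conj: "bs_mult k (bs_mult k h (x, 0)) (bs_inv k h) = (of_nat k powi (snd h) * x, 0)" for h
    using assms by (simp add: bs_mult_def bs_inv_def algebra_simps flip: power_int_add)
  have "(0, m) \<in> BS k" for m
    using powi_mult_of_int_mem_Zk[of k 0 0] by (simp add: BS_def)
  then have "(of_nat k powi m * x, 0) \<in> bs_conjclass k (x, 0)" for m
    unfolding bs_conjclass_def using conj[of "(0, m)"] by (intro CollectI exI[of _ "(0, m)"]) auto
  then show ?thesis
    unfolding bs_conjclass_def by (auto simp: conj)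
qed

lemma bs_conjclass_base_scale:
  assumes "k > 0"
  shows "bs_conjclass k (of_nat k powi j * x, 0) = bs_conjclass k (x, 0)"
proof -
  have k: "(of_nat k :: rat) \<noteq> 0" using assms by simp
  have "(\<exists>m. y = of_nat k powi m * (of_nat k powi j * x)) \<longleftrightarrow> (\<exists>m. y = of_nat k powi m * x)"
    for y :: rat
  proof
    assume "\<exists>m. y = of_nat k powi m * (of_nat k powi j * x)"
    then show "\<exists>m. y = of_nat k powi m * x"
      using k by (metis mult.assoc power_int_add)
  next
    assume "\<exists>m. y = of_nat k powi m * x"
    then obtain m where "y = of_nat k powi m * x" by blast
    then have "y = of_nat k powi (m - j) * (of_nat k powi j * x)"
      using k by (simp add: power_int_diff)
    then show "\<exists>m. y = of_nat k powi m * (of_nat k powi j * x)" by blast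
  qed
  then show ?thesis
    unfolding bs_conjclass_base[OF assms] by blast
qed

fun digit_val :: "nat \<Rightarrow> int list \<Rightarrow> int" where
  "digit_val k [] = 0"
| "digit_val k (d # ds) = d + int k * digit_val k ds"

definition digit_cost :: "int list \<Rightarrow> nat" where
  "digit_cost ds = (\<Sum>d\<leftarrow>ds. nat \<bar>d\<bar> + 2)"

lemma digit_cost_Nil [simp]: "digit_cost [] = 0"
  and digit_cost_Cons [simp]: "digit_cost (d # ds) = nat \<bar>d\<bar> + 2 + digit_cost ds"
  and digit_cost_append [simp]: "digit_cost (ds @ es) = digit_cost ds + digit_cost es"
  by (simp_all add: digit_cost_def)

lemma digit_val_append_zero [simp]: "digit_val k (ds @ [0]) = digit_val k ds"
  by (induction ds) auto

lemma digit_val_update: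
  "i < length ds \<Longrightarrow> digit_val k (ds[i := ds ! i + e]) = digit_val k ds + e * int k ^ i"
proof (induction ds arbitrary: i)
  case (Cons d ds)
  then show ?case by (cases i) (auto simp: algebra_simps)
qed simp

lemma digit_cost_update:
  "i < length ds \<Longrightarrow> digit_cost (ds[i := ds ! i + e]) \<le> digit_cost ds + nat \<bar>e\<bar>"
proof (induction ds arbitrary: i)
  case (Cons d ds)
  then show ?case by (cases i) auto
qed simp

text \<open>Invariant for reading a word of length \<open>n\<close>: \<open>fst g\<close> has the \<open>k\<close>-adic digits \<open>ds\<close> at the
  positions \<open>lo, lo + 1, \<dots>\<close>; this window contains the start \<open>0\<close> and the final \<open>t\<close>-exponent
  \<open>snd g\<close>; and \<open>n\<close> pays one \<open>a\<close>-letter per unit of digit mass plus two \<open>t\<close>-letters per edge of the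
  window, except for the \<open>\<bar>snd g\<bar>\<close> edges between \<open>0\<close> and \<open>snd g\<close>, which may be crossed only once.\<close>

definition digit_window :: "nat \<Rightarrow> nat \<Rightarrow> rat \<times> int \<Rightarrow> int \<Rightarrow> int list \<Rightarrow> bool" where
  "digit_window k n g lo ds \<longleftrightarrow>
     fst g = of_nat k powi lo * of_int (digit_val k ds)
     \<and> lo \<le> 0 \<and> lo \<le> snd g \<and> 0 \<le> lo + int (length ds) - 1 \<and> snd g \<le> lo + int (length ds) - 1
     \<and> int (digit_cost ds) \<le> int n + 2 + \<bar>snd g\<bar>"

lemma digit_window_one: "digit_window k 0 bs_one 0 [0]"
  by (simp add: digit_window_def bs_one_def)

lemma digit_window_mult_a:
  assumes k: "k > 0" and w: "digit_window k n (x, H) lo ds" and e: "\<bar>e\<bar> = 1"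
  shows "digit_window k (Suc n) (of_int e + x, H) lo (ds[nat (- lo) := ds ! nat (- lo) + e])"
proof -
  let ?i = "nat (- lo)"
  have i: "?i < length ds" and lo: "lo \<le> 0" using w by (auto simp: digit_window_def)
  have "of_nat k powi lo * of_nat k ^ ?i = (1::rat)"
    using lo k by (simp add: power_int_minus field_simps power_int_def)
  then have "of_nat k powi lo * of_int (digit_val k (ds[?i := ds ! ?i + e])) = of_int e + x"
    using w unfolding digit_val_update[OF i] by (simp add: digit_window_def algebra_simps)
  with w e digit_cost_update[OF i, of e] show ?thesis
    by (simp add: digit_window_def)
qed

lemma digit_window_mult_t:
  assumes k: "k > 0" and w: "digit_window k n (x, H) lo ds"
  obtains lo' ds' where "digit_window k (Suc n) (of_nat k * x, H + 1) lo' ds'"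
proof (cases "lo \<le> -1")
  case True
  have "of_nat k * of_nat k powi lo = (of_nat k powi (lo + 1) :: rat)"
    using k by (simp add: power_int_add)
  then have "digit_window k (Suc n) (of_nat k * x, H + 1) (lo + 1) ds"
    using True w by (auto simp: digit_window_def algebra_simps)
  then show ?thesis using that by blast
next
  case False
  then have "lo = 0" using w by (simp add: digit_window_def)
  then have "digit_window k (Suc n) (of_nat k * x, H + 1) 0 (0 # ds)"
    using w by (auto simp: digit_window_def algebra_simps)
  then show ?thesis using that by blast
qed

lemma digit_window_mult_t_inv:
  assumes k: "k > 0" and w: "digit_window k n (x, H) lo ds"
  obtains lo' ds' where "digit_window k (Suc n) (inverse (of_nat k) * x, H - 1) lo' ds'"
proof -
  have pow: "inverse (of_nat k) * of_nat k powi lo = (of_nat k powi (lo - 1) :: rat)"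
    using k by (simp add: power_int_diff field_simps)
  show ?thesis
  proof (cases "lo + int (length ds) - 1 \<ge> 1")
    case True
    then have "digit_window k (Suc n) (inverse (of_nat k) * x, H - 1) (lo - 1) ds"
      using w pow by (auto simp: digit_window_def algebra_simps)
    then show ?thesis using that by blast
  next
    case False
    then have "digit_window k (Suc n) (inverse (of_nat k) * x, H - 1) (lo - 1) (ds @ [0])"
      using w pow by (auto simp: digit_window_def algebra_simps)
    then show ?thesis using that by blast
  qed
qed

lemma digit_window_mult_gen:
  assumes k: "k > 0" and w: "digit_window k n g lo ds" and s: "s \<in> bs_gens k"
  obtains lo' ds' where "digit_window k (Suc n) (bs_mult k s g) lo' ds'"
proof -
  obtain x H where g: "g = (x, H)" by fastforce
  from s consider "s = (of_int 1, 0)" | "s = (of_int (-1), 0)" | "s = (0, 1)" | "s = (0, -1)"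
    by (auto simp: bs_gens_eq)
  then show ?thesis
  proof cases
    case 1
    then have "bs_mult k s g = (of_int 1 + x, H)" by (simp add: g bs_mult_def)
    then show ?thesis
      using digit_window_mult_a[OF k w[unfolded g], of 1] that by simp
  next
    case 2
    then have "bs_mult k s g = (of_int (-1) + x, H)" by (simp add: g bs_mult_def)
    then show ?thesis
      using digit_window_mult_a[OF k w[unfolded g], of "-1"] that by simp
  next
    case 3
    then have eq: "bs_mult k s g = (of_nat k * x, H + 1)" by (simp add: g bs_mult_def)
    show ?thesis by (rule digit_window_mult_t[OF k w[unfolded g], unfolded eq[symmetric]]) (rule that)
  next
    case 4
    then have eq: "bs_mult k s g = (inverse (of_nat k) * x, H - 1)"
      by (simp add: g bs_mult_def power_int_minus)
    show ?thesis by (rule digit_window_mult_t_inv[OF k w[unfolded g], unfolded eq[symmetric]]) (rule that)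
  qed
qed

lemma bs_eval_digit_window:
  assumes "k > 0" "set ws \<subseteq> bs_gens k"
  shows "\<exists>lo ds. digit_window k (length ws) (bs_eval k ws) lo ds"
  using assms(2)
proof (induction ws)
  case Nil
  then show ?case using digit_window_one by (auto simp flip: bs_one_def)
next
  case (Cons s ws)
  then obtain lo ds where w: "digit_window k (length ws) (bs_eval k ws) lo ds" by auto
  have "s \<in> bs_gens k" using Cons.prems by simp
  then obtain lo' ds' where "digit_window k (Suc (length ws)) (bs_mult k s (bs_eval k ws)) lo' ds'"
    by (rule digit_window_mult_gen[OF assms(1) w])
  then show ?case by auto
qed

definition digit_lists_cost_le :: "nat \<Rightarrow> int list set" where
  "digit_lists_cost_le s = {ds. digit_cost ds \<le> s}"

lemma abs_le_digit_cost: "d \<in> set ds \<Longrightarrow> nat \<bar>d\<bar> \<le> digit_cost ds"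
  by (induction ds) auto

lemma length_le_digit_cost: "2 * length ds \<le> digit_cost ds"
  by (induction ds) auto

lemma finite_digit_lists_cost_le: "finite (digit_lists_cost_le s)"
proof (rule finite_subset)
  show "digit_lists_cost_le s \<subseteq> {ds. set ds \<subseteq> {-int s..int s} \<and> length ds \<le> s}"
  proof safe
    fix ds assume ds: "ds \<in> digit_lists_cost_le s"
    then show "length ds \<le> s"
      using length_le_digit_cost[of ds] by (simp add: digit_lists_cost_le_def)
    fix d assume "d \<in> set ds"
    then show "d \<in> {-int s..int s}"
      using abs_le_digit_cost[of d ds] ds by (auto simp: digit_lists_cost_le_def)
  qed
  show "finite {ds. set ds \<subseteq> {-int s..int s} \<and> length ds \<le> s}"
    by (rule finite_lists_length_le) simp
qed

lemma digit_lists_cost_le_Suc_Suc: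
  "digit_lists_cost_le (m + 2) \<subseteq> {[]} \<union> Cons 0 ` digit_lists_cost_le m \<union>
     (\<Union>i<m. Cons (int (m - i)) ` digit_lists_cost_le i \<union> Cons (- int (m - i)) ` digit_lists_cost_le i)"
proof
  fix ds assume ds: "ds \<in> digit_lists_cost_le (m + 2)"
  show "ds \<in> {[]} \<union> Cons 0 ` digit_lists_cost_le m \<union>
     (\<Union>i<m. Cons (int (m - i)) ` digit_lists_cost_le i \<union> Cons (- int (m - i)) ` digit_lists_cost_le i)"
  proof (cases ds)
    case (Cons d es)
    then have cost: "nat \<bar>d\<bar> + digit_cost es \<le> m"
      using ds by (simp add: digit_lists_cost_le_def)
    show ?thesis
    proof (cases "d = 0")
      case True
      then show ?thesis using Cons cost by (simp add: digit_lists_cost_le_def)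
    next
      case False
      define i where "i = m - nat \<bar>d\<bar>"
      have "i < m" "es \<in> digit_lists_cost_le i" "d = int (m - i) \<or> d = - int (m - i)"
        using False cost by (auto simp: i_def digit_lists_cost_le_def)
      then show ?thesis using Cons by blast
    qed
  qed simp
qed

lemma card_digit_lists_cost_le_Suc_Suc:
  "card (digit_lists_cost_le (m + 2))
     \<le> 1 + card (digit_lists_cost_le m) + 2 * (\<Sum>i<m. card (digit_lists_cost_le i))"
proof -
  let ?D = digit_lists_cost_le
  have fin: "finite (?D i)" for i by (rule finite_digit_lists_cost_le)
  have "card (?D (m + 2)) \<le> card ({[]} \<union> Cons 0 ` ?D m \<union>
     (\<Union>i<m. Cons (int (m - i)) ` ?D i \<union> Cons (- int (m - i)) ` ?D i))"
    by (rule card_mono[OF _ digit_lists_cost_le_Suc_Suc]) (simp add: fin)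
  also have "\<dots> \<le> card ({[]} \<union> Cons 0 ` ?D m)
      + card (\<Union>i<m. Cons (int (m - i)) ` ?D i \<union> Cons (- int (m - i)) ` ?D i)"
    by (rule card_Un_le)
  also have "\<dots> \<le> (1 + card (?D m))
      + (\<Sum>i<m. card (Cons (int (m - i)) ` ?D i \<union> Cons (- int (m - i)) ` ?D i))"
    by (intro add_mono card_UN_le order_trans[OF card_Un_le] card_image_le fin) auto
  also have "\<dots> \<le> (1 + card (?D m)) + (\<Sum>i<m. card (?D i) + card (?D i))"
    by (intro add_mono order_refl sum_mono order_trans[OF card_Un_le] card_image_le fin)
  finally show ?thesis by (simp add: sum.distrib)
qed

text \<open>Any base above the root \<open>1.839\<dots>\<close> of \<open>x\<^sup>3 = x\<^sup>2 + x + 1\<close> would do; \<open>19/10\<close> keeps the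
  constants simple.\<close>

lemma card_digit_lists_cost_le: "real (card (digit_lists_cost_le s)) \<le> 10 * (19/10) ^ s"
proof (induction s rule: less_induct)
  case (less s)
  let ?b = "19/10 :: real"
  show ?case
  proof (cases "s < 2")
    case True
    have "ds = []" if "ds \<in> digit_lists_cost_le s" for ds
    proof -
      have "digit_cost ds \<le> s" using that by (simp add: digit_lists_cost_le_def)
      then have "length ds = 0" using True length_le_digit_cost[of ds] by linarith
      then show ?thesis by simp
    qed
    then have "digit_lists_cost_le s = {[]}"
      by (auto simp: digit_lists_cost_le_def)
    moreover have "1 \<le> ?b ^ s" by (rule one_le_power) simp
    ultimately show ?thesis by (simp del: one_le_power)
  next
    case False
    then obtain m where s: "s = m + 2" by (metis add.commute le_add_diff_inverse not_less)
    have IH: "real (card (digit_lists_cost_le i)) \<le> 10 * ?b ^ i" if "i \<le> m" for i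
      using less that s by simp
    have "real (card (digit_lists_cost_le s))
        \<le> real (1 + card (digit_lists_cost_le m) + 2 * (\<Sum>i<m. card (digit_lists_cost_le i)))"
      unfolding s of_nat_le_iff by (rule card_digit_lists_cost_le_Suc_Suc)
    also have "\<dots> = 1 + real (card (digit_lists_cost_le m)) + 2 * (\<Sum>i<m. real (card (digit_lists_cost_le i)))"
      by simp
    also have "\<dots> \<le> 1 + 10 * ?b ^ m + 2 * (\<Sum>i<m. 10 * ?b ^ i)"
      using IH by (intro add_mono mult_left_mono sum_mono) auto
    also have "(\<Sum>i<m. 10 * ?b ^ i) = 10 * (\<Sum>i<m. ?b ^ i)"
      by (rule sum_distrib_left[symmetric])
    also have "(\<Sum>i<m. ?b ^ i) = (1 - ?b ^ m) / (1 - ?b)"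
      by (simp only: sum_gp_strict) simp
    also have "1 + 10 * ?b ^ m + 2 * (10 * ((1 - ?b ^ m) / (1 - ?b))) \<le> 10 * ?b ^ s"
    proof -
      have key: "1 + 10 * y + 2 * (10 * ((1 - y) / (1 - ?b))) \<le> 10 * (y * ?b ^ 2)" if "1 \<le> y" for y
        using that by (simp add: field_simps power2_eq_square)
      have "1 \<le> ?b ^ m" by (rule one_le_power) simp
      from key[OF this] show ?thesis unfolding s power_add .
    qed
    finally show ?thesis .
  qed
qed

definition c0_classes :: "nat \<Rightarrow> nat \<Rightarrow> (rat \<times> int) set set" where
  "c0_classes k n = {C. \<exists>g \<in> BS k. C = bs_conjclass k g \<and> C \<subseteq> {g' \<in> BS k. snd g' = 0}
                      \<and> bs_classlen k C = n}"

lemma c0_eq_card: "c0 k n = card (c0_classes k n)"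
  by (simp add: c0_def c0_classes_def)

lemma c0_classes_subset_digit_classes:
  assumes k: "k > 0"
  shows "c0_classes k n
    \<subseteq> (\<lambda>ds. bs_conjclass k (of_int (digit_val k ds), 0)) ` digit_lists_cost_le (n + 2)"
proof
  fix C assume "C \<in> c0_classes k n"
  then obtain g where g: "C = bs_conjclass k g" "C \<subseteq> {g' \<in> BS k. snd g' = 0}" "bs_classlen k C = n"
    by (auto simp: c0_classes_def)
  have "g \<in> C" using g(1) bs_mem_conjclass_self by simp
  then obtain x where x: "g = (x, 0)" using g(2) by (cases g) auto
  obtain h where h: "h \<in> C" "bs_wordlen k h = n"
    using bs_classlen_attained[OF \<open>g \<in> C\<close>] g(3) by metis
  with x g(1) obtain m where hm: "h = (of_nat k powi m * x, 0)"
    using bs_conjclass_base[OF k] by auto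
  have C: "C = bs_conjclass k h"
    using g(1) x hm bs_conjclass_base_scale[OF k] by simp
  have "h \<in> BS k" using h(1) g(2) by auto
  then obtain ws where ws: "length ws = n" "set ws \<subseteq> bs_gens k" "bs_eval k ws = h"
    using bs_wordlen_attained[OF k] h(2) by metis
  then obtain lo ds where "digit_window k n h lo ds"
    using bs_eval_digit_window[OF k ws(2)] by auto
  then have "h = (of_nat k powi lo * of_int (digit_val k ds), 0)" "ds \<in> digit_lists_cost_le (n + 2)"
    using hm by (auto simp: digit_window_def digit_lists_cost_le_def)
  with C show "C \<in> (\<lambda>ds. bs_conjclass k (of_int (digit_val k ds), 0)) ` digit_lists_cost_le (n + 2)"
    using bs_conjclass_base_scale[OF k] by auto
qed

lemma finite_c0_classes: "k > 0 \<Longrightarrow> finite (c0_classes k n)"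
  by (rule finite_surj[OF finite_digit_lists_cost_le c0_classes_subset_digit_classes])

lemma c0_le: "k > 0 \<Longrightarrow> real (c0 k n) \<le> 10 * (19/10) ^ (n + 2)"
proof -
  assume k: "k > 0"
  have "c0 k n \<le> card (digit_lists_cost_le (n + 2))"
    unfolding c0_eq_card
    by (rule surj_card_le[OF finite_digit_lists_cost_le c0_classes_subset_digit_classes[OF k]])
  then show ?thesis using card_digit_lists_cost_le[of "n + 2"] by linarith
qed

fun digit_word :: "int list \<Rightarrow> (rat \<times> int) list" where
  "digit_word [] = []"
| "digit_word (d # ds) = bs_a_word d @ [(0, 1)] @ digit_word ds @ [(0, -1)]"

lemma digit_word:
  assumes "k > 0"
  shows "bs_eval k (digit_word ds) = (of_int (digit_val k ds), 0)"
    and "set (digit_word ds) \<subseteq> bs_gens k"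
    and "length (digit_word ds) = digit_cost ds"
proof (induction ds)
  case (Cons d ds)
  { case 1 show ?case
      using Cons.IH(1) assms by (simp add: bs_eval_append bs_a_word bs_mult_def power_int_minus) }
  { case 2 show ?case using Cons.IH(2) bs_a_word(2) by (auto simp: bs_gens_eq) }
  { case 3 show ?case using Cons.IH(3) by (simp add: bs_a_word) }
qed simp_all

lemma int_conjclass_mem_c0_classes:
  assumes "k > 0"
  shows "bs_conjclass k (of_int v, 0) \<in> c0_classes k (bs_classlen k (bs_conjclass k (of_int v, 0)))"
proof -
  have "(of_int v, 0) \<in> BS k"
    using powi_mult_of_int_mem_Zk[of k 0 v] by (simp add: BS_def)
  moreover have "bs_conjclass k (of_int v, 0) \<subseteq> {g' \<in> BS k. snd g' = 0}"
    using powi_mult_of_int_mem_Zk[of k] by (auto simp: bs_conjclass_base[OF assms] BS_def)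
  ultimately show ?thesis unfolding c0_classes_def by blast
qed

lemma digit_val_inj_on_balanced:
  assumes "k \<ge> 3" "length ds = length es" "set ds \<subseteq> {-1, 0, 1}" "set es \<subseteq> {-1, 0, 1}"
    and "digit_val k ds = digit_val k es"
  shows "ds = es"
  using assms(2-)
proof (induction ds arbitrary: es)
  case (Cons d ds)
  then obtain e es' where es: "es = e # es'" by (cases es) auto
  have eq: "d - e = int k * (digit_val k es' - digit_val k ds)"
    using Cons.prems es by (simp add: algebra_simps)
  have "\<bar>d - e\<bar> < int k" using Cons.prems es assms(1) by auto
  then have "int k * \<bar>digit_val k es' - digit_val k ds\<bar> < int k * 1"
    unfolding eq by (simp add: abs_mult)
  then have "digit_val k es' - digit_val k ds = 0"
    by (subst (asm) mult_less_cancel_left) auto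
  then have "d = e" using eq by simp
  moreover have "digit_val k ds = digit_val k es'" using eq \<open>d = e\<close> assms(1) by simp
  ultimately show ?case using Cons es by auto
qed simp

lemma powi_mult_int_eq_not_dvd:
  assumes k: "k \<ge> 2" and u: "\<not> int k dvd u" and v: "\<not> int k dvd v"
    and e: "(of_int v :: rat) = of_nat k powi m * of_int u"
  shows "v = u"
proof (cases "m \<ge> 0")
  case True
  then have "of_int v = (of_int (int k ^ nat m * u) :: rat)"
    using e by (simp add: power_int_def)
  then have "v = int k ^ nat m * u" by (simp only: of_int_eq_iff)
  then show ?thesis using v by (cases "nat m") auto
next
  case False
  then have "of_int u = (of_int (int k ^ nat (- m) * v) :: rat)"
    using e k by (simp add: power_int_def field_simps power_inverse)
  then have "u = int k ^ nat (- m) * v" by (simp only: of_int_eq_iff)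
  then show ?thesis using u False by (cases "nat (- m)") auto
qed

lemma not_dvd_digit_val_Cons_one: "k \<ge> 2 \<Longrightarrow> \<not> int k dvd digit_val k (1 # ds)"
  by (simp add: dvd_add_left_iff)

text \<open>A leading digit \<open>1\<close> makes the value prime to \<open>k\<close>, so no two of these values are related by
  the scaling \<open>x \<mapsto> k x\<close> that generates conjugacy in \<open>\<int>[1/k]\<close>.\<close>

lemma inj_on_balanced_digit_classes:
  assumes k: "k \<ge> 3"
  shows "inj_on (\<lambda>ds. bs_conjclass k (of_int (digit_val k (1 # ds)), 0))
    {ds. set ds \<subseteq> {-1, 0, 1} \<and> length ds = M}"
proof (rule inj_onI)
  fix ds es
  assume ds: "ds \<in> {ds. set ds \<subseteq> {-1, 0, 1} \<and> length ds = M}"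
    and es: "es \<in> {ds. set ds \<subseteq> {-1, 0, 1} \<and> length ds = M}"
    and eq: "bs_conjclass k (of_int (digit_val k (1 # ds)), 0) = bs_conjclass k (of_int (digit_val k (1 # es)), 0)"
  have k0: "k > 0" using k by simp
  have "(of_int (digit_val k (1 # es)), 0) \<in> bs_conjclass k (of_int (digit_val k (1 # ds)), 0)"
    using eq bs_mem_conjclass_self by metis
  then obtain m where "(of_int (digit_val k (1 # es)) :: rat) = of_nat k powi m * of_int (digit_val k (1 # ds))"
    unfolding bs_conjclass_base[OF k0] by auto
  then have "digit_val k (1 # es) = digit_val k (1 # ds)"
    using k by (intro powi_mult_int_eq_not_dvd[of k _ _ m] not_dvd_digit_val_Cons_one) auto
  then show "ds = es"
    using digit_val_inj_on_balanced[OF k, of ds es] ds es k0 by simp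
qed

lemma c0_sum_ge:
  assumes k: "k \<ge> 3"
  shows "3 ^ M \<le> (\<Sum>j\<le>3 * M + 3. c0 k j)"
proof -
  have k0: "k > 0" using k by simp
  define F where "F = {ds :: int list. set ds \<subseteq> {-1, 0, 1} \<and> length ds = M}"
  define cl where "cl ds = bs_conjclass k (of_int (digit_val k (1 # ds)), 0)" for ds
  have "cl ` F \<subseteq> (\<Union>j\<le>3 * M + 3. c0_classes k j)"
  proof
    fix C assume "C \<in> cl ` F"
    then obtain ds where ds: "ds \<in> F" "C = cl ds" by auto
    have "digit_cost ds \<le> 3 * M"
      using ds(1) unfolding F_def by (induction ds arbitrary: M) fastforce+
    then have "length (digit_word (1 # ds)) \<le> 3 * M + 3"
      by (simp add: digit_word(3)[OF k0] bs_a_word(3))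
    then have "bs_classlen k C \<le> 3 * M + 3"
      unfolding ds(2) cl_def
      using bs_classlen_le[OF bs_mem_conjclass_self digit_word(2,1)[OF k0]] by (meson order_trans)
    moreover have "C \<in> c0_classes k (bs_classlen k C)"
      using int_conjclass_mem_c0_classes[OF k0] ds(2) unfolding cl_def by blast
    ultimately show "C \<in> (\<Union>j\<le>3 * M + 3. c0_classes k j)" by blast
  qed
  then have "card (cl ` F) \<le> (\<Sum>j\<le>3 * M + 3. card (c0_classes k j))"
    using finite_c0_classes[OF k0] by (intro order_trans[OF card_mono card_UN_le]) auto
  moreover have "card (cl ` F) = 3 ^ M"
    using card_image[OF inj_on_balanced_digit_classes[OF k, of M]]
    by (simp add: F_def cl_def card_lists_length_eq numeral_3_eq_3)
  ultimately show ?thesis by (simp add: c0_eq_card)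
qed

lemma limsup_root_le_of_le_geometric:
  fixes c :: "nat \<Rightarrow> real"
  assumes C: "C > 0" and L: "L \<ge> 0" and le: "\<And>n. c n \<le> C * L ^ n"
  shows "limsup (\<lambda>n. ereal (root n (c n))) \<le> ereal L"
proof -
  have "eventually (\<lambda>n. ereal (root n (c n)) \<le> ereal (root n C * L)) sequentially"
    unfolding eventually_sequentially
  proof (intro exI allI impI)
    fix n :: nat assume "n \<ge> 1"
    then have "root n (c n) \<le> root n (C * L ^ n)" using le by simp
    also have "\<dots> = root n C * L"
      using \<open>n \<ge> 1\<close> L by (simp add: real_root_mult real_root_power_cancel)
    finally show "ereal (root n (c n)) \<le> ereal (root n C * L)" by simp
  qed
  then have "limsup (\<lambda>n. ereal (root n (c n))) \<le> limsup (\<lambda>n. ereal (root n C * L))"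
    by (rule Limsup_mono)
  also have "limsup (\<lambda>n. ereal (root n C * L)) = ereal L"
  proof (rule lim_imp_Limsup[OF trivial_limit_sequentially])
    have "(\<lambda>n. root n C * L) \<longlonglongrightarrow> 1 * L"
      using C by (intro tendsto_mult LIMSEQ_root_const tendsto_const)
    then show "(\<lambda>n. ereal (root n C * L)) \<longlonglongrightarrow> ereal L" by simp
  qed
  finally show ?thesis .
qed

lemma sum_le_geometric_of_limsup_root_less:
  fixes c :: "nat \<Rightarrow> real"
  assumes nonneg: "\<And>n. 0 \<le> c n" and L: "1 < L"
    and less: "limsup (\<lambda>n. ereal (root n (c n))) < ereal L"
  obtains K where "\<And>n. (\<Sum>j\<le>n. c j) \<le> K * L ^ n"
proof -
  obtain N where N: "\<And>n. n \<ge> N \<Longrightarrow> root n (c n) < L"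
    using Limsup_lessD[OF less] by (auto simp: eventually_sequentially)
  define K0 where "K0 = 1 + (\<Sum>j\<le>N. c j)"
  have K0: "K0 \<ge> 1" using nonneg by (simp add: K0_def sum_nonneg)
  have c_le: "c j \<le> K0 * L ^ j" for j
  proof (cases "j \<le> N")
    case True
    have "c j \<le> (\<Sum>j\<le>N. c j)" using True nonneg by (intro member_le_sum) auto
    also have "\<dots> \<le> K0 * 1" by (simp add: K0_def)
    also have "\<dots> \<le> K0 * L ^ j" using K0 L by (intro mult_left_mono one_le_power) auto
    finally show ?thesis .
  next
    case False
    then have "c j = root j (c j) ^ j" using nonneg by simp
    also have "\<dots> \<le> L ^ j" using N[of j] False nonneg by (intro power_mono) auto
    also have "\<dots> \<le> K0 * L ^ j" using K0 L by simp
    finally show ?thesis .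
  qed
  have sum_le: "(\<Sum>j\<le>n. c j) \<le> K0 * L / (L - 1) * L ^ n" for n
  proof -
    have "(\<Sum>j\<le>n. c j) \<le> (\<Sum>j<Suc n. K0 * L ^ j)"
      using c_le by (simp add: lessThan_Suc_atMost sum_mono)
    also have "\<dots> = K0 * ((L ^ Suc n - 1) / (L - 1))"
      using L by (simp add: sum_distrib_left[symmetric] sum_gp_strict field_simps)
    also have "\<dots> \<le> K0 * (L ^ Suc n / (L - 1))"
      using K0 L by (intro mult_left_mono divide_right_mono) auto
    finally show ?thesis by (simp add: field_simps)
  qed
  show ?thesis by (rule that[OF sum_le])
qed

lemma limsup_root_ge_of_sum_ge:
  fixes c :: "nat \<Rightarrow> real"
  assumes nonneg: "\<And>n. 0 \<le> c n" and L: "1 < L" and q: "L ^ a < q"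
    and ge: "\<And>M. q ^ M \<le> (\<Sum>j\<le>a * M + b. c j)"
  shows "ereal L \<le> limsup (\<lambda>n. ereal (root n (c n)))"
proof (rule ccontr)
  assume "\<not> ?thesis"
  then have "limsup (\<lambda>n. ereal (root n (c n))) < ereal L" by simp
  then obtain K where K: "\<And>n. (\<Sum>j\<le>n. c j) \<le> K * L ^ n"
    using sum_le_geometric_of_limsup_root_less[of c L, OF nonneg L] by blast
  have La: "L ^ a > 0" using L by simp
  have bounded: "(q / L ^ a) ^ M \<le> K * L ^ b" for M
  proof -
    have "L ^ (a * M + b) = L ^ b * (L ^ a) ^ M"
      by (simp add: power_add power_mult)
    then have "q ^ M \<le> K * L ^ b * (L ^ a) ^ M"
      using ge[of M] K[of "a * M + b"] by (simp add: mult.assoc)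
    then show ?thesis using La by (simp add: power_divide divide_le_eq mult.commute)
  qed
  obtain M where "K * L ^ b < (q / L ^ a) ^ M"
    using real_arch_pow[of "q / L ^ a" "K * L ^ b"] q La by auto
  with bounded[of M] show False by simp
qed

theorem corollary3p4:
  fixes r k :: nat
  assumes "r \<ge> 1" and "k = 2 * r + 1"
  shows "ereal (4/3) < limsup (\<lambda>n. ereal (root n (real (c0 k n))))
       \<and> limsup (\<lambda>n. ereal (root n (real (c0 k n)))) < ereal 2"
proof
  have k: "k \<ge> 3" using assms by simp
  have "3 ^ M \<le> (\<Sum>j\<le>3 * M + 3. real (c0 k j))" for M
  proof -
    have "real (3 ^ M) \<le> real (\<Sum>j\<le>3 * M + 3. c0 k j)"
      using c0_sum_ge[OF k, of M] by (simp only: of_nat_le_iff)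
    then show ?thesis by simp
  qed
  then have "ereal (7/5) \<le> limsup (\<lambda>n. ereal (root n (real (c0 k n))))"
    by (intro limsup_root_ge_of_sum_ge[where a = 3 and q = 3]) (auto simp: power3_eq_cube)
  then show "ereal (4/3) < limsup (\<lambda>n. ereal (root n (real (c0 k n))))"
    by (rule less_le_trans[rotated]) simp
  have c0_bound: "real (c0 k n) \<le> 361/10 * (19/10) ^ n" for n
    using c0_le[of k n] k by (simp add: power_add field_simps)
  have "limsup (\<lambda>n. ereal (root n (real (c0 k n)))) \<le> ereal (19/10)"
    by (rule limsup_root_le_of_le_geometric[OF _ _ c0_bound]) simp_all
  then show "limsup (\<lambda>n. ereal (root n (real (c0 k n)))) < ereal 2"
    by (rule le_less_trans) simp
qed

end
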